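(* Fix $\beta>1$ and let $(D_n)_{n\geq1}$ be a sequence of non-empty finite sets of generalised $\beta$-digits. Let $k\geq3$ be odd, and suppose that $D_n=D_k$ for every odd $n>k$ and $D_n=\{0\}$ for every other $n>1$. With $\ell_n,u_n$ the least and greatest elements of $D_n$, $\Delta_n=u_n-\ell_n$, and $\delta_n$ the largest gap between consecutive elements of $D_n$ ($\delta_n=0$ if $|D_n|=1$), the family of inequalities $$\delta_n\leq\sum_{i=1}^{\infty}\Delta_{n+i}\,\beta^{-i}\qquad(n\geq1)$$ is equivalent to the pair of inequalities $$(\beta^2-1)\,\delta_k\leq\Delta_k\qquad\text{and}\qquad(\beta^{k-1}-\beta^{k-3})\,\delta_1\leq\Delta_k.$$
   Context: A generalised $\beta$-digit is a string $c_0.c_1\ldots c_k$ of non-negative integers, with value $\sum_{i=0}^k c_i\beta^{-i}$ (an ordinary non-negative integer is a generalised digit of length 1). Least/greatest elements and gaps are taken with respect to these values. *)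

theory Defs
  imports Complex_Main
begin

text \<open>A generalised beta-digit c0.c1...ck is a non-empty list of naturals;
its value is the sum of c_i * beta^(-i).\<close>
definition gdval :: "real \<Rightarrow> nat list \<Rightarrow> real" where
  "gdval \<beta> c = (\<Sum>i<length c. real (c ! i) / \<beta> ^ i)"

definition gd_least :: "real \<Rightarrow> nat list set \<Rightarrow> real" where
  "gd_least \<beta> D = Min (gdval \<beta> ` D)"

definition gd_greatest :: "real \<Rightarrow> nat list set \<Rightarrow> real" where
  "gd_greatest \<beta> D = Max (gdval \<beta> ` D)"

definition gd_width :: "real \<Rightarrow> nat list set \<Rightarrow> real" where
  "gd_width \<beta> D = gd_greatest \<beta> D - gd_least \<beta> D"

definition gd_gaps :: "real \<Rightarrow> nat list set \<Rightarrow> real set" where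
  "gd_gaps \<beta> D = {b - a | a b. a \<in> gdval \<beta> ` D \<and> b \<in> gdval \<beta> ` D \<and> a < b \<and>
       \<not> (\<exists>c \<in> gdval \<beta> ` D. a < c \<and> c < b)}"

definition gd_maxgap :: "real \<Rightarrow> nat list set \<Rightarrow> real" where
  "gd_maxgap \<beta> D = (if gd_gaps \<beta> D = {} then 0 else Max (gd_gaps \<beta> D))"

end

theory Submission
  imports Defs
begin

text \<open>Only the widths and largest gaps of the digit sets enter, and for \<open>n > 1\<close> both are
  either those of \<open>D\<^sub>k\<close> (odd \<open>n \<ge> k\<close>) or \<open>0\<close>. The right-hand sides are therefore tails of the
  \<open>\<beta>\<close>-expansion of the sequence that equals \<open>\<Delta>\<^sub>k\<close> at odd \<open>n \<ge> k\<close> and vanishes elsewhere. This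
  sequence is 2-periodic from \<open>k - 1\<close> on and zero between \<open>2\<close> and \<open>k - 1\<close>, so the tail at odd
  \<open>n \<ge> k\<close> is \<open>\<Delta>\<^sub>k / (\<beta>\<^sup>2 - 1)\<close> and the tail at \<open>1\<close> is \<open>\<Delta>\<^sub>k / ((\<beta>\<^sup>2 - 1) \<beta>\<^sup>k\<^sup>-\<^sup>3)\<close>; all other
  inequalities hold trivially.\<close>

definition beta_tail :: "real \<Rightarrow> (nat \<Rightarrow> real) \<Rightarrow> nat \<Rightarrow> real" where
  "beta_tail \<beta> v n = (\<Sum>i. v (n + Suc i) / \<beta> ^ Suc i)"

lemma summable_beta_tail:
  fixes \<beta> :: real and v :: "nat \<Rightarrow> real"
  assumes "\<beta> > 1" and "\<And>j. \<bar>v j\<bar> \<le> M"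
  shows "summable (\<lambda>i. v (n + Suc i) / \<beta> ^ Suc i)"
proof (rule summable_comparison_test)
  show "summable (\<lambda>i. M * (1 / \<beta>) ^ i)"
    using assms(1) by (intro summable_mult summable_geometric) auto
  have "\<bar>v (n + Suc i)\<bar> / \<beta> ^ Suc i \<le> M / \<beta> ^ i" for i
  proof -
    have "\<bar>v (n + Suc i)\<bar> / \<beta> ^ Suc i \<le> \<bar>v (n + Suc i)\<bar> / \<beta> ^ i"
      using assms(1) by (intro divide_left_mono) auto
    also have "\<dots> \<le> M / \<beta> ^ i"
      using assms by (intro divide_right_mono) auto
    finally show ?thesis .
  qed
  then show "\<exists>N. \<forall>i\<ge>N. norm (v (n + Suc i) / \<beta> ^ Suc i) \<le> M * (1 / \<beta>) ^ i"
    using assms(1) by (simp add: power_one_over abs_mult)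
qed

lemma beta_tail_Suc:
  fixes \<beta> :: real and v :: "nat \<Rightarrow> real"
  assumes "\<beta> > 1" and "\<And>j. \<bar>v j\<bar> \<le> M"
  shows "beta_tail \<beta> v n = (v (Suc n) + beta_tail \<beta> v (Suc n)) / \<beta>"
proof -
  let ?f = "\<lambda>i. v (n + Suc i) / \<beta> ^ Suc i"
  have "(\<lambda>i. ?f (Suc i)) = (\<lambda>i. v (Suc n + Suc i) / \<beta> ^ Suc i / \<beta>)"
    by (simp add: field_simps)
  then have "(\<Sum>i. ?f (Suc i)) = beta_tail \<beta> v (Suc n) / \<beta>"
    unfolding beta_tail_def by (simp only: suminf_divide[OF summable_beta_tail[of \<beta> v M, OF assms]])
  moreover have "(\<Sum>i. ?f (Suc i)) = beta_tail \<beta> v n - v (Suc n) / \<beta>"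
    unfolding beta_tail_def using suminf_split_head[OF summable_beta_tail[of \<beta> v M, OF assms]] by simp
  ultimately show ?thesis by (simp add: add_divide_distrib)
qed

lemma beta_tail_nonneg:
  fixes \<beta> :: real and v :: "nat \<Rightarrow> real"
  assumes "\<beta> > 1" and "\<And>j. \<bar>v j\<bar> \<le> M" and "\<And>j. 0 \<le> v j"
  shows "0 \<le> beta_tail \<beta> v n"
  unfolding beta_tail_def using summable_beta_tail[of \<beta> v M, OF assms(1,2)] assms(1,3)
  by (intro suminf_nonneg) auto

lemma beta_tail_periodic2:
  fixes \<beta> :: real and v :: "nat \<Rightarrow> real"
  assumes "\<beta> > 1" and "\<And>j. \<bar>v j\<bar> \<le> M" and "\<And>j. m < j \<Longrightarrow> v (j + 2) = v j"
  shows "beta_tail \<beta> v m * (\<beta>\<^sup>2 - 1) = \<beta> * v (m + 1) + v (m + 2)"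
proof -
  have "beta_tail \<beta> v (m + 2) = beta_tail \<beta> v m"
    unfolding beta_tail_def using assms(3)[of "m + Suc _"] by (simp add: add.commute add.left_commute)
  then have "beta_tail \<beta> v m = (v (m + 1) + (v (m + 2) + beta_tail \<beta> v m) / \<beta>) / \<beta>"
    using beta_tail_Suc[of \<beta> v M, OF assms(1,2), of m] beta_tail_Suc[of \<beta> v M, OF assms(1,2), of "m + 1"]
    by (simp add: numeral_2_eq_2)
  then show ?thesis
    using assms(1) by (simp add: field_simps power2_eq_square)
qed

lemma beta_tail_zero_block:
  fixes \<beta> :: real and v :: "nat \<Rightarrow> real"
  assumes "\<beta> > 1" and "\<And>j. \<bar>v j\<bar> \<le> M" and "m \<le> n" and "\<And>j. m < j \<Longrightarrow> j \<le> n \<Longrightarrow> v j = 0"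
  shows "beta_tail \<beta> v m * \<beta> ^ (n - m) = beta_tail \<beta> v n"
  using assms(3,4)
proof (induction n rule: dec_induct)
  case base
  show ?case by simp
next
  case (step n)
  have "beta_tail \<beta> v m * \<beta> ^ (Suc n - m) = beta_tail \<beta> v n * \<beta>"
    using step by (simp add: Suc_diff_le)
  also have "\<dots> = beta_tail \<beta> v (Suc n)"
    using beta_tail_Suc[of \<beta> v M, OF assms(1,2), of n] step.prems[of "Suc n"] step.hyps assms(1) by simp
  finally show ?case .
qed

lemma beta_tail_inequalities_iff:
  fixes \<beta> W :: real and \<delta> :: "nat \<Rightarrow> real"
  assumes \<beta>: "\<beta> > 1" and k: "odd k" "k \<ge> 3" and W: "W \<ge> 0"
    and \<delta>: "\<And>n. 1 < n \<Longrightarrow> \<delta> n = (if k \<le> n \<and> odd n then \<delta> k else 0)"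
  shows "(\<forall>n\<ge>1. \<delta> n \<le> beta_tail \<beta> (\<lambda>j. if k \<le> j \<and> odd j then W else 0) n)
    \<longleftrightarrow> (\<beta>\<^sup>2 - 1) * \<delta> k \<le> W \<and> (\<beta> ^ (k - 1) - \<beta> ^ (k - 3)) * \<delta> 1 \<le> W"
proof -
  define v where "v = (\<lambda>j. if k \<le> j \<and> odd j then W else 0)"
  define T where "T = beta_tail \<beta> v"
  have bound: "\<bar>v j\<bar> \<le> W" for j using W by (simp add: v_def)
  have periodic: "v (j + 2) = v j" if "k - 1 < j" for j
    using that k by (auto simp: v_def)
  have "1 < \<beta>\<^sup>2" using \<beta> by (simp add: one_less_power)
  then have \<beta>2: "\<beta>\<^sup>2 - 1 > 0" by simp
  have tail_odd: "T n = W / (\<beta>\<^sup>2 - 1)" if "k \<le> n" "odd n" for n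
    using beta_tail_periodic2[of \<beta> v W, OF \<beta> bound, of n] periodic that \<beta>2
    by (simp add: T_def v_def eq_divide_eq)
  have "\<beta> ^ (k - 1 - 1) = \<beta> * \<beta> ^ (k - 3)" and "\<beta> ^ (k - 1) = \<beta>\<^sup>2 * \<beta> ^ (k - 3)"
    using k(2) by (auto simp: power2_eq_square dest!: le_Suc_ex)
  then have "\<beta> * ((\<beta> ^ (k - 1) - \<beta> ^ (k - 3)) * T 1) = T 1 * \<beta> ^ (k - 1 - 1) * (\<beta>\<^sup>2 - 1)"
    by (simp add: algebra_simps)
  also have "T 1 * \<beta> ^ (k - 1 - 1) = T (k - 1)"
    unfolding T_def by (rule beta_tail_zero_block[OF \<beta> bound]) (use k in \<open>auto simp: v_def\<close>)
  also have "T (k - 1) * (\<beta>\<^sup>2 - 1) = \<beta> * W"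
    using beta_tail_periodic2[of \<beta> v W, OF \<beta> bound, of "k - 1"] periodic k by (simp add: T_def v_def)
  finally have tail_one: "(\<beta> ^ (k - 1) - \<beta> ^ (k - 3)) * T 1 = W"
    using \<beta> by simp
  have "(\<forall>n\<ge>1. \<delta> n \<le> T n) \<longleftrightarrow> \<delta> k \<le> T k \<and> \<delta> 1 \<le> T 1"
  proof (intro iffI conjI allI impI)
    fix n :: nat assume "n \<ge> 1" and "\<delta> k \<le> T k \<and> \<delta> 1 \<le> T 1"
    moreover have "T n = T k" if "k \<le> n" "odd n"
      using tail_odd[OF that] tail_odd[of k] k by simp
    moreover have "0 \<le> T n"
      unfolding T_def using beta_tail_nonneg[of \<beta> v W, OF \<beta> bound] W by (simp add: v_def)
    ultimately show "\<delta> n \<le> T n"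
      using \<delta>[of n] by (cases "n = 1") auto
  qed (use k in simp_all)
  moreover have "\<delta> k \<le> T k \<longleftrightarrow> (\<beta>\<^sup>2 - 1) * \<delta> k \<le> W"
    using tail_odd[of k] k \<beta>2 by (simp add: pos_le_divide_eq mult.commute)
  moreover have "\<beta> ^ (k - 3) < \<beta> ^ (k - 1)"
    using power_strict_increasing[of "k - 3" "k - 1" \<beta>] \<beta> k by simp
  then have "\<delta> 1 \<le> T 1 \<longleftrightarrow> (\<beta> ^ (k - 1) - \<beta> ^ (k - 3)) * \<delta> 1 \<le> W"
    using tail_one by (metis diff_gt_0_iff_gt mult_le_cancel_left_pos)
  ultimately show ?thesis by (simp add: T_def v_def)
qed

lemma gd_width_nonneg:
  assumes "finite D" and "c \<in> D"
  shows "0 \<le> gd_width \<beta> D"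
proof -
  have "Min (gdval \<beta> ` D) \<le> gdval \<beta> c" and "gdval \<beta> c \<le> Max (gdval \<beta> ` D)"
    using assms by simp_all
  then show ?thesis
    unfolding gd_width_def gd_greatest_def gd_least_def by simp
qed

lemma gd_width_singleton: "gd_width \<beta> {c} = 0"
  unfolding gd_width_def gd_greatest_def gd_least_def by simp

lemma gd_maxgap_singleton: "gd_maxgap \<beta> {c} = 0"
  unfolding gd_maxgap_def gd_gaps_def by auto

theorem corollary2p3:
  fixes \<beta> :: real and D :: "nat \<Rightarrow> nat list set" and k :: nat
  assumes "\<beta> > 1"
    and "\<forall>n\<ge>1. finite (D n) \<and> D n \<noteq> {} \<and> (\<forall>c\<in>D n. c \<noteq> [])"
    and "odd k" and "k \<ge> 3"
    and "\<forall>n. n > k \<and> odd n \<longrightarrow> D n = D k"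
    and "\<forall>n. n > 1 \<and> n \<noteq> k \<and> \<not> (n > k \<and> odd n) \<longrightarrow> D n = {[0]}"
  shows "(\<forall>n\<ge>1. gd_maxgap \<beta> (D n)
            \<le> (\<Sum>i. gd_width \<beta> (D (n + Suc i)) / \<beta> ^ Suc i))
         \<longleftrightarrow> ((\<beta>\<^sup>2 - 1) * gd_maxgap \<beta> (D k) \<le> gd_width \<beta> (D k)
              \<and> (\<beta> ^ (k - 1) - \<beta> ^ (k - 3)) * gd_maxgap \<beta> (D 1) \<le> gd_width \<beta> (D k))"
proof -
  define W where "W = gd_width \<beta> (D k)"
  have D: "D n = (if k \<le> n \<and> odd n then D k else {[0]})" if "1 < n" for n
    using assms(3,5,6) that by (cases "n = k") auto
  have "0 \<le> W"
    unfolding W_def using assms(2,4) by (metis ex_in_conv gd_width_nonneg le_trans one_le_numeral)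
  moreover have "gd_maxgap \<beta> (D n) = (if k \<le> n \<and> odd n then gd_maxgap \<beta> (D k) else 0)"
    if "1 < n" for n
    using D[OF that] by (simp add: gd_maxgap_singleton)
  moreover have "gd_width \<beta> (D n) = (if k \<le> n \<and> odd n then W else 0)" if "1 < n" for n
    using D[OF that] by (simp add: W_def gd_width_singleton)
  then have "(\<Sum>i. gd_width \<beta> (D (n + Suc i)) / \<beta> ^ Suc i)
      = beta_tail \<beta> (\<lambda>j. if k \<le> j \<and> odd j then W else 0) n" if "1 \<le> n" for n
    unfolding beta_tail_def using that by (intro suminf_cong) simp
  ultimately show ?thesis
    using beta_tail_inequalities_iff[OF assms(1,3,4), of W "\<lambda>n. gd_maxgap \<beta> (D n)"] by (simp add: W_def)
qed

end
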